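(* Let $n$ and $m$ be non-negative integers with $m\leq\binom{n}{2}$. Let $d$ and $\ell$ be the unique integers with $m=\binom{d}{2}+\ell$, $d\geq 1$ and $0\leq \ell\leq d-1$. Then the maximum of $c(G)$ over all graphs $G$ with $n$ vertices and $m$ edges equals $2^d+2^\ell+n-d-1$.
   Context: All graphs are finite, simple and undirected. A clique of a graph $G$ is a (possibly empty) set of pairwise adjacent vertices; in particular $\emptyset$ is a clique, every single vertex is a clique, and every edge is a clique. $c(G)$ denotes the number of cliques of $G$. *)

theory Defs
  imports Main
begin

definition simple_graph :: "'a set \<Rightarrow> 'a set set \<Rightarrow> bool" where
  "simple_graph V E \<longleftrightarrow> finite V \<and> (\<forall>e\<in>E. e \<subseteq> V \<and> card e = 2)"

text \<open>Cliques (including the empty set): sets of pairwise adjacent vertices.\<close>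
definition cliques :: "'a set \<Rightarrow> 'a set set \<Rightarrow> 'a set set" where
  "cliques V E = {S. S \<subseteq> V \<and> (\<forall>x\<in>S. \<forall>y\<in>S. x \<noteq> y \<longrightarrow> {x, y} \<in> E)}"

definition num_cliques :: "'a set \<Rightarrow> 'a set set \<Rightarrow> nat" where
  "num_cliques V E = card (cliques V E)"

end

theory Submission
  imports Defs
begin

text \<open>If \<open>G\<close> has \<open>(d choose 2) + l\<close>
  edges with \<open>l < d\<close>, a vertex \<open>v\<close> of minimum degree \<open>\<delta>\<close> satisfies
  \<open>\<delta> (\<delta> + 1) \<le> n \<delta> \<le> 2 |E| < d (d + 1)\<close>, so \<open>\<delta> < d\<close>. The cliques through \<open>v\<close> are
  \<open>v\<close> plus a subset of its neighbourhood, so \<open>c(G) \<le> c(G - v) + 2^\<delta>\<close>, and \<open>G - v\<close> has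
  \<open>(d' choose 2) + l'\<close> edges with \<open>(d', l') = (d, l - \<delta>)\<close> if \<open>\<delta> \<le> l\<close> and
  \<open>(d', l') = (d - 1, l + d - 1 - \<delta>)\<close> otherwise; convexity of \<open>2^x\<close> closes the induction.
  The bound is attained by the colex graph: a clique on \<open>d\<close> vertices and one more vertex
  joined to \<open>l\<close> of them, all other vertices isolated.\<close>

definition neighbours :: "'a set \<Rightarrow> 'a set set \<Rightarrow> 'a \<Rightarrow> 'a set" where
  "neighbours V E v = {u \<in> V. {u, v} \<in> E}"

definition degree :: "'a set \<Rightarrow> 'a set set \<Rightarrow> 'a \<Rightarrow> nat" where
  "degree V E v = card (neighbours V E v)"

lemma simple_graph_finite_edges:
  assumes "simple_graph V E"
  shows "finite E"
  using assms by (auto simp: simple_graph_def intro: finite_subset[of E "Pow V"])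

lemma finite_cliques: "finite V \<Longrightarrow> finite (cliques V E)"
  by (simp add: cliques_def)

lemma incident_edges_eq_image_neighbours:
  assumes "simple_graph V E"
  shows "{e \<in> E. v \<in> e} = (\<lambda>u. {u, v}) ` neighbours V E v"
proof (intro equalityI subsetI)
  fix e assume e: "e \<in> {e \<in> E. v \<in> e}"
  then have "e \<subseteq> V" "card e = 2" using assms by (auto simp: simple_graph_def)
  then obtain u where "e = {u, v}" "u \<in> V" using e by (auto simp: card_2_iff)
  then show "e \<in> (\<lambda>u. {u, v}) ` neighbours V E v" using e by (auto simp: neighbours_def)
qed (auto simp: neighbours_def)

lemma card_incident_edges:
  assumes "simple_graph V E"
  shows "card {e \<in> E. v \<in> e} = degree V E v"
proof -
  have "inj_on (\<lambda>u. {u, v}) (neighbours V E v)"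
    by (auto simp: inj_on_def doubleton_eq_iff)
  then show ?thesis
    by (simp add: incident_edges_eq_image_neighbours[OF assms] card_image degree_def)
qed

lemma sum_degree_eq_twice_card_edges:
  assumes "simple_graph V E"
  shows "(\<Sum>v\<in>V. degree V E v) = 2 * card E"
proof -
  have "finite V" using assms by (simp add: simple_graph_def)
  moreover have "\<forall>e\<in>E. card {v \<in> V. v \<in> e} = 2"
  proof
    fix e assume "e \<in> E"
    then have "{v \<in> V. v \<in> e} = e" "card e = 2"
      using assms by (auto simp: simple_graph_def)
    then show "card {v \<in> V. v \<in> e} = 2" by simp
  qed
  ultimately show ?thesis
    using sum_multicount[of V E "\<lambda>v e. v \<in> e" 2] simple_graph_finite_edges[OF assms]
    by (simp add: card_incident_edges[OF assms])
qed

lemma degree_le_card_minus_one: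
  assumes "simple_graph V E" "v \<in> V"
  shows "degree V E v \<le> card V - 1"
proof -
  have "neighbours V E v \<subseteq> V - {v}"
    using assms(1) by (auto simp: neighbours_def simple_graph_def)
  moreover have "finite V" using assms(1) by (simp add: simple_graph_def)
  ultimately show ?thesis
    using assms(2) card_mono[of "V - {v}"] by (simp add: degree_def)
qed

lemma exists_vertex_degree_less:
  assumes "simple_graph V E" "V \<noteq> {}"
    and "card E = (d choose 2) + l" "l < d"
  obtains v where "v \<in> V" "degree V E v < d"
proof -
  have "finite V" using assms(1) by (simp add: simple_graph_def)
  define \<delta> where "\<delta> = Min (degree V E ` V)"
  have "\<delta> \<in> degree V E ` V"
    using \<open>finite V\<close> assms(2) by (simp add: \<delta>_def)
  then obtain v where v: "v \<in> V" "degree V E v = \<delta>" by auto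
  have "0 < card V" using v(1) \<open>finite V\<close> card_gt_0_iff by blast
  then have "\<delta> + 1 \<le> card V"
    using degree_le_card_minus_one[OF assms(1) v(1)] v(2) by linarith
  then have "(\<delta> + 1) * \<delta> \<le> card V * \<delta>" by (rule mult_le_mono1)
  also have "\<dots> \<le> (\<Sum>u\<in>V. degree V E u)"
    using sum_mono[of V "\<lambda>_. \<delta>" "degree V E"] \<open>finite V\<close> by (simp add: \<delta>_def)
  also have "\<dots> = d * (d - 1) + 2 * l"
    using sum_degree_eq_twice_card_edges[OF assms(1)] assms(3)
    by (simp add: choose_two algebra_simps)
  also have "\<dots> < (d + 1) * d"
    using assms(4) by (cases d) simp_all
  finally have "(\<delta> + 1) * \<delta> < (d + 1) * d" .
  then have "\<delta> < d"
    by (meson add_le_mono1 mult_le_mono not_le)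
  with v that show thesis by simp
qed

lemma simple_graph_delete_vertex:
  "simple_graph V E \<Longrightarrow> simple_graph (V - {v}) {e \<in> E. v \<notin> e}"
  by (auto simp: simple_graph_def)

lemma card_edges_delete_vertex:
  assumes "simple_graph V E"
  shows "card E = card {e \<in> E. v \<notin> e} + degree V E v"
proof -
  have "card E = card ({e \<in> E. v \<notin> e} \<union> {e \<in> E. v \<in> e})"
    by (rule arg_cong[of _ _ card]) blast
  also have "\<dots> = card {e \<in> E. v \<notin> e} + card {e \<in> E. v \<in> e}"
    using simple_graph_finite_edges[OF assms] by (intro card_Un_disjoint) auto
  finally show ?thesis by (simp add: card_incident_edges[OF assms])
qed

lemma card_cliques_delete_vertex_le:
  assumes "finite V"
  shows "card (cliques V E) \<le> card (cliques (V - {v}) {e \<in> E. v \<notin> e}) + 2 ^ degree V E v"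
proof -
  let ?C = "cliques (V - {v}) {e \<in> E. v \<notin> e}" and ?P = "insert v ` Pow (neighbours V E v)"
  have "cliques V E \<subseteq> ?C \<union> ?P"
  proof
    fix S assume S: "S \<in> cliques V E"
    show "S \<in> ?C \<union> ?P"
    proof (cases "v \<in> S")
      case True
      then have "S = insert v (S - {v})" "S - {v} \<subseteq> neighbours V E v"
        using S by (auto simp: cliques_def neighbours_def insert_commute)
      then show ?thesis by blast
    next
      case False
      then show ?thesis using S by (auto simp: cliques_def)
    qed
  qed
  moreover have "finite ?C" "finite ?P"
    using assms by (simp_all add: finite_cliques neighbours_def)
  ultimately have "card (cliques V E) \<le> card (?C \<union> ?P)"
    by (intro card_mono) auto
  also have "\<dots> \<le> card ?C + card ?P"
    by (rule card_Un_le)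
  also have "card ?P \<le> 2 ^ degree V E v"
    using card_image_le[of "Pow (neighbours V E v)" "insert v"] assms
    by (simp add: card_Pow degree_def neighbours_def)
  finally show ?thesis by simp
qed

lemma two_pow_add_two_pow_le:
  assumes "a \<le> x" "x \<le> b"
  shows "2 ^ (a + b - x) + 2 ^ x \<le> (2::nat) ^ a + 2 ^ b"
proof -
  obtain p q where pq: "x = a + p" "b = a + p + q"
    using assms le_Suc_ex by metis
  obtain s t :: nat where st: "2 ^ p = s + 1" "2 ^ q = t + 1"
    by (metis add.commute one_le_power one_le_numeral le_Suc_ex)
  have "2 ^ q + 2 ^ p \<le> 1 + 2 ^ p * (2::nat) ^ q"
    by (simp add: st algebra_simps)
  then have "2 ^ a * (2 ^ q + 2 ^ p) \<le> 2 ^ a * (1 + 2 ^ p * (2::nat) ^ q)"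
    by (rule mult_le_mono2)
  then show ?thesis
    using pq by (simp add: power_add algebra_simps)
qed

lemma choose2_repr_minus:
  fixes d l \<delta> :: nat
  assumes "\<delta> < d" "l < d"
  obtains d' l' where "(d' choose 2) + l' + \<delta> = (d choose 2) + l" "l' < d'"
    and "2 ^ d' + 2 ^ l' + 2 ^ \<delta> + d \<le> 2 ^ d + 2 ^ l + d' + 1"
proof (cases "\<delta> \<le> l")
  case True
  have "2 ^ (0 + l - \<delta>) + 2 ^ \<delta> \<le> (2::nat) ^ 0 + 2 ^ l"
    using True by (intro two_pow_add_two_pow_le) auto
  then show thesis
    using that[of d "l - \<delta>"] True assms by simp
next
  case False
  have choose: "d choose 2 = (d - 1 choose 2) + (d - 1)"
    using assms(1) by (cases d) (simp_all add: numeral_2_eq_2)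
  have "2 ^ (l + (d - 1) - \<delta>) + 2 ^ \<delta> \<le> (2::nat) ^ l + 2 ^ (d - 1)"
    using False assms by (intro two_pow_add_two_pow_le) auto
  moreover have "(2::nat) ^ d = 2 * 2 ^ (d - 1)"
    using assms(1) by (cases d) simp_all
  ultimately show thesis
    using that[of "d - 1" "l + (d - 1) - \<delta>"] False assms choose by simp
qed

theorem card_cliques_le:
  assumes "simple_graph V E" "card E = (d choose 2) + l" "l < d"
  shows "card (cliques V E) + d + 1 \<le> 2 ^ d + 2 ^ l + card V"
  using assms
proof (induction "card V" arbitrary: V E d l rule: less_induct)
  case less
  show ?case
  proof (cases "V = {}")
    case True
    have "d < 2 ^ d" "1 \<le> (2::nat) ^ l" by simp_all
    then have "d + 2 \<le> 2 ^ d + 2 ^ l" by linarith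
    moreover have "cliques {} E = {{}}" by (auto simp: cliques_def)
    ultimately show ?thesis using True by simp
  next
    case False
    obtain v where v: "v \<in> V" "degree V E v < d"
      using exists_vertex_degree_less[OF less.prems(1) False less.prems(2,3)] .
    obtain d' l' where d'l': "(d' choose 2) + l' + degree V E v = (d choose 2) + l" "l' < d'"
      and pow: "2 ^ d' + 2 ^ l' + 2 ^ degree V E v + d \<le> 2 ^ d + 2 ^ l + d' + 1"
      using choose2_repr_minus[OF v(2) less.prems(3)] .
    let ?V = "V - {v}" and ?E = "{e \<in> E. v \<notin> e}"
    have "finite V" using less.prems(1) by (simp add: simple_graph_def)
    then have card_V: "card ?V + 1 = card V" "card ?V < card V"
      using v(1) card_Diff1_less[of V v] by (auto simp: card_gt_0_iff)
    have "card ?E = (d' choose 2) + l'"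
      using card_edges_delete_vertex[OF less.prems(1), of v] less.prems(2) d'l'(1) by simp
    then have "card (cliques ?V ?E) + d' + 1 \<le> 2 ^ d' + 2 ^ l' + card ?V"
      using less.hyps[OF card_V(2) simple_graph_delete_vertex[OF less.prems(1)] _ d'l'(2)]
      by blast
    moreover have "card (cliques V E) \<le> card (cliques ?V ?E) + 2 ^ degree V E v"
      using card_cliques_delete_vertex_le[OF \<open>finite V\<close>] .
    ultimately show ?thesis
      using pow card_V(1) by linarith
  qed
qed

text \<open>The first \<open>(d choose 2) + l\<close> edges of the colexicographic order on 2-sets of naturals:
  a complete graph on \<open>{0..<d}\<close> plus the vertex \<open>d\<close> joined to \<open>{0..<l}\<close>.\<close>
definition colex_graph :: "nat \<Rightarrow> nat \<Rightarrow> nat set set" where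
  "colex_graph d l = {e. e \<subseteq> {0..<d} \<and> card e = 2} \<union> (\<lambda>i. {i, d}) ` {0..<l}"

lemma card_colex_graph: "card (colex_graph d l) = (d choose 2) + l"
proof -
  have "card {e. e \<subseteq> {0..<d} \<and> card e = 2} = d choose 2"
    using n_subsets[of "{0..<d}" 2] by simp
  moreover have "card ((\<lambda>i. {i, d}) ` {0..<l}) = l"
    by (subst card_image) (auto simp: inj_on_def doubleton_eq_iff)
  ultimately show ?thesis
    unfolding colex_graph_def by (subst card_Un_disjoint) auto
qed

lemma simple_graph_colex_graph:
  assumes "l \<le> d" "d \<le> n" "0 < l \<Longrightarrow> d < n"
  shows "simple_graph {0..<n} (colex_graph d l)"
  using assms by (auto simp: simple_graph_def colex_graph_def)

lemma Pow_subset_cliques_colex_graph: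
  "d \<le> n \<Longrightarrow> Pow {0..<d} \<subseteq> cliques {0..<n} (colex_graph d l)"
  by (auto simp: cliques_def colex_graph_def card_2_iff)

lemma insert_Pow_subset_cliques_colex_graph:
  assumes "l \<le> d" "d < n"
  shows "insert d ` Pow {0..<l} \<subseteq> cliques {0..<n} (colex_graph d l)"
  using assms by (fastforce simp: cliques_def colex_graph_def insert_commute card_2_iff)

lemma card_cliques_colex_graph_ge:
  assumes "l < d" "d < n"
  shows "2 ^ d + 2 ^ l + n \<le> card (cliques {0..<n} (colex_graph d l)) + d + 1"
proof -
  let ?A = "Pow {0..<d}" and ?B = "insert d ` Pow {0..<l}" and ?C = "(\<lambda>v. {v}) ` {d + 1..<n}"
  have "inj_on (insert d) (Pow {0..<l})"
  proof (rule inj_onI)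
    fix S T assume "S \<in> Pow {0..<l}" "T \<in> Pow {0..<l}" "insert d S = insert d T"
    moreover from this have "d \<notin> S" "d \<notin> T" using assms(1) by auto
    ultimately show "S = T" by (simp add: insert_ident)
  qed
  then have "card ?B = 2 ^ l"
    by (simp add: card_image card_Pow)
  moreover have "card ?C = n - (d + 1)"
    by (subst card_image) auto
  moreover have "card (?A \<union> ?B \<union> ?C) = card ?A + card ?B + card ?C"
    by (subst card_Un_disjoint; auto)+
  moreover have "?C \<subseteq> cliques {0..<n} (colex_graph d l)"
    by (auto simp: cliques_def)
  then have "?A \<union> ?B \<union> ?C \<subseteq> cliques {0..<n} (colex_graph d l)"
    using Pow_subset_cliques_colex_graph insert_Pow_subset_cliques_colex_graph assms by auto
  then have "card (?A \<union> ?B \<union> ?C) \<le> card (cliques {0..<n} (colex_graph d l))"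
    by (intro card_mono finite_cliques) auto
  ultimately show ?thesis
    using assms(2) by (simp add: card_Pow)
qed

lemma exists_graph_card_cliques_ge:
  assumes "(d choose 2) + l \<le> n choose 2" "l < d"
  obtains E where "simple_graph {0..<n} E" "card E = (d choose 2) + l"
    and "2 ^ d + 2 ^ l + n \<le> card (cliques {0..<n} E) + d + 1"
proof (cases "d < n")
  case True
  then show thesis
    using that[of "colex_graph d l"] assms(2) simple_graph_colex_graph[of l d n]
      card_colex_graph card_cliques_colex_graph_ge by simp
next
  case False
  have "n choose 2 \<le> d choose 2"
    using False by (simp add: binomial_right_mono)
  then have l: "l = 0" and choose: "d choose 2 = n choose 2"
    using assms(1) by simp_all
  have "2 ^ d + n \<le> 2 ^ n + d" \<comment> \<open>\<open>d = n\<close>, or the degenerate case \<open>n = 0\<close>, \<open>d = 1\<close>\<close>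
  proof (cases "d = n")
    case False
    then have "Suc n choose 2 \<le> d choose 2"
      using \<open>\<not> d < n\<close> by (simp add: binomial_right_mono)
    then have "n = 0"
      using choose by (simp add: numeral_2_eq_2)
    moreover have "d < 2"
    proof (rule ccontr)
      assume "\<not> d < 2"
      then have "1 \<le> d choose 2" using binomial_right_mono[of 2 d 2] by simp
      moreover have "n choose 2 = 0" using \<open>n = 0\<close> by (simp add: numeral_2_eq_2)
      ultimately show False using choose by linarith
    qed
    ultimately have "d = 1" using assms(2) by linarith
    with \<open>n = 0\<close> show ?thesis by simp
  qed simp
  moreover have "card (Pow {0..<n}) \<le> card (cliques {0..<n} (colex_graph n 0))"
    using Pow_subset_cliques_colex_graph[of n n 0] by (intro card_mono finite_cliques) auto
  ultimately have "2 ^ d + 2 ^ l + n \<le> card (cliques {0..<n} (colex_graph n 0)) + d + 1"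
    using l by (simp add: card_Pow)
  then show thesis
    using that[of "colex_graph n 0"] simple_graph_colex_graph[of 0 n n] card_colex_graph l choose
    by simp
qed

theorem theorem2:
  fixes n m d l :: nat
  assumes "m \<le> n choose 2"
    and "m = (d choose 2) + l" and "d \<ge> 1" and "l \<le> d - 1"
  shows "int (Max {num_cliques {0..<n} E | E. simple_graph {0..<n} E \<and> card E = m})
           = 2 ^ d + 2 ^ l + int n - int d - 1"
proof -
  let ?M = "{num_cliques {0..<n} E | E. simple_graph {0..<n} E \<and> card E = m}"
  have "l < d" using assms(3,4) by simp
  obtain E where E: "simple_graph {0..<n} E" "card E = m"
    and many: "2 ^ d + 2 ^ l + n \<le> num_cliques {0..<n} E + d + 1"
    using exists_graph_card_cliques_ge[of d l n] assms(1,2) \<open>l < d\<close>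
    unfolding num_cliques_def by blast
  have upper: "c + d + 1 \<le> 2 ^ d + 2 ^ l + n" if "c \<in> ?M" for c
  proof -
    obtain G where "c = num_cliques {0..<n} G" "simple_graph {0..<n} G" "card G = m"
      using \<open>c \<in> ?M\<close> by blast
    then show ?thesis
      using card_cliques_le[of "{0..<n}" G d l] \<open>l < d\<close> assms(2) by (simp add: num_cliques_def)
  qed
  have "?M \<subseteq> num_cliques {0..<n} ` Pow (Pow {0..<n})"
    by (auto simp: simple_graph_def)
  then have "finite ?M" by (rule finite_subset) simp
  moreover have "num_cliques {0..<n} E \<in> ?M" using E by blast
  moreover from this have exact: "num_cliques {0..<n} E + d + 1 = 2 ^ d + 2 ^ l + n"
    using upper many by fastforce
  ultimately have "Max ?M = num_cliques {0..<n} E"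
    using upper by (intro Max_eqI) fastforce+
  moreover have "int (num_cliques {0..<n} E) + int d + 1 = 2 ^ d + 2 ^ l + int n"
    using arg_cong[where f = int, OF exact] by simp
  ultimately show ?thesis by linarith
qed

end
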